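(* Let $\mathcal{S}=(X,\xrightarrow{\Sigma},\le)$ be a very-WSTS and $I_0\in\mathrm{Idl}(X)$, and let $c,d$ be nodes of $\mathcal{T}_{I_0}$. (1) If $d$ is reachable from $c$ along arcs of $\mathcal{T}_{I_0}$ (i.e. $d$ is a descendant of $c$ or $c$ itself) and $\mathrm{ideal}(c)=\mathrm{ideal}(d)$, then $\mathrm{numaccel}(c)=\mathrm{numaccel}(d)$. (2) If $d$ is reachable from $c$ in the stuttering automaton $\mathcal{A}_{I_0}$, then $\mathrm{numaccel}(c)\le\mathrm{numaccel}(d)$.
   Context: A (labeled, ordered) transition system is $\mathcal{S}=(X,\xrightarrow{\Sigma},\le)$: $X$ a set, $\Sigma$ a finite alphabet, $\xrightarrow{a}\subseteq X\times X$, $\le$ a quasi-ordering; relations extend to words. $\mathrm{Post}(x,a)=\{y:x\xrightarrow{a}y\}$, extended to sets by union; $\downarrow D=\{x:\exists y\in D,\,x\le y\}$. WSTS: $\le$ a wqo and $x\xrightarrow{a}y$, $x'\ge x$ imply $x'\xrightarrow{w}y'\ge y$ for some $w$. Strong monotonicity: $x\xrightarrow{a}y$, $x'\ge x$ imply $x'\xrightarrow{a}y'$ with $y'\ge y$; strong-strict: additionally $x'>x$ gives $y'>y$. Deterministic: at most one $a$-successor. Ideals: nonempty downward-closed directed subsets, set $\mathrm{Idl}(X)$. Completion $\widehat{\mathcal{S}}=(\mathrm{Idl}(X),\Rightarrow_\Sigma,\subseteq)$ with $I\xRightarrow{a}J$ iff $J$ is a $\subseteq$-maximal ideal included in $\downarrow\mathrm{Post}(I,a)$;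 if deterministic, $w(I)$ is the unique $J$ with $I\xRightarrow{w}J$, when defined. $w^\infty(I)=\bigcup_kw^k(I)$ if $I\subset w(I)$, else $I$ ($w\in\Sigma^+$). Levels: $\mathrm{Idl}_0(X)=\mathrm{Idl}(X)$, $\mathrm{Idl}_n(X)$ = unions of strictly increasing sequences in $\mathrm{Idl}_{n-1}(X)$; finitely many levels if some $\mathrm{Idl}_n(X)=\emptyset$. Very-WSTS: WSTS with strong monotonicity whose completion is a deterministic WSTS ($\subseteq$ a wqo on ideals) with strong-strict monotonicity, and $\mathrm{Idl}(X)$ has finitely many levels. Ideal Karp-Miller algorithm on input $(\mathcal{S},I_0)$ (terminates for very-WSTS): builds a tree with node labels $(\mathrm{ideal}(c),\mathrm{numaccel}(c))\in\mathrm{Idl}(X)\times\mathbb{N}$ and letter-labeled arcs, starting with root $(I_0,0)$. While a node $c:(I,n)$ is unmarked: if a proper ancestor has ideal $I$, mark $c$; otherwise, if a proper ancestor $c'$ has $\mathrm{ideal}(c')\subset I$ and $\mathrm{numaccel}(c')=n$, relabel $c$ by $(w^\infty(I),n+1)$ with $w$ the arc-label word from $c'$ to $c$; then, with $(I,n)$ the current label, add for each $a\in\Sigma$ with $a(I)$ defined a child $(a(I),n)$ via an $a$-arc; mark $c$. $\mathcal{T}_{I_0}$ is the returned tree. The stuttering automaton $\mathcal{A}_{I_0}$ has the nodes of $\mathcal{T}_{I_0}$ as states, the arcs of $\mathcal{T}_{I_0}$ as transitions, plus an $\varepsilon$-transition from each leaf $c$ to any ancestor $c'$ with $\mathrm{ideal}(c')=\mathrm{ideal}(c)$.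 *)

theory Defs
  imports Main "HOL-Library.Sublist"
begin

fun gsteps :: "('a \<Rightarrow> 's \<Rightarrow> 's \<Rightarrow> bool) \<Rightarrow> 'a list \<Rightarrow> 's \<Rightarrow> 's \<Rightarrow> bool" where
  "gsteps step [] x y = (x = y)"
| "gsteps step (a # w) x y = (\<exists>z. step a x z \<and> gsteps step w z y)"

definition qo_on_rel :: "'s set \<Rightarrow> ('s \<Rightarrow> 's \<Rightarrow> bool) \<Rightarrow> bool" where
  "qo_on_rel S le \<longleftrightarrow> (\<forall>x\<in>S. le x x) \<and>
     (\<forall>x\<in>S. \<forall>y\<in>S. \<forall>z\<in>S. le x y \<longrightarrow> le y z \<longrightarrow> le x z)"

definition wqo_on_rel :: "'s set \<Rightarrow> ('s \<Rightarrow> 's \<Rightarrow> bool) \<Rightarrow> bool" where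
  "wqo_on_rel S le \<longleftrightarrow> qo_on_rel S le \<and>
     (\<forall>f :: nat \<Rightarrow> 's. (\<forall>i. f i \<in> S) \<longrightarrow> (\<exists>i j. i < j \<and> le (f i) (f j)))"

definition closed_ts :: "'s set \<Rightarrow> ('a \<Rightarrow> 's \<Rightarrow> 's \<Rightarrow> bool) \<Rightarrow> bool" where
  "closed_ts S step \<longleftrightarrow> (\<forall>a x y. x \<in> S \<longrightarrow> step a x y \<longrightarrow> y \<in> S)"

definition wsts :: "'s set \<Rightarrow> ('a \<Rightarrow> 's \<Rightarrow> 's \<Rightarrow> bool) \<Rightarrow> ('s \<Rightarrow> 's \<Rightarrow> bool) \<Rightarrow> bool" where
  "wsts S step le \<longleftrightarrow> closed_ts S step \<and> wqo_on_rel S le \<and>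
     (\<forall>a x y x'. x \<in> S \<longrightarrow> x' \<in> S \<longrightarrow> step a x y \<longrightarrow> le x x' \<longrightarrow>
        (\<exists>w y'. gsteps step w x' y' \<and> le y y'))"

definition strong_mono :: "'s set \<Rightarrow> ('a \<Rightarrow> 's \<Rightarrow> 's \<Rightarrow> bool) \<Rightarrow> ('s \<Rightarrow> 's \<Rightarrow> bool) \<Rightarrow> bool" where
  "strong_mono S step le \<longleftrightarrow>
     (\<forall>a x y x'. x \<in> S \<longrightarrow> x' \<in> S \<longrightarrow> step a x y \<longrightarrow> le x x' \<longrightarrow>
        (\<exists>y'. step a x' y' \<and> le y y'))"

definition strict_of :: "('s \<Rightarrow> 's \<Rightarrow> bool) \<Rightarrow> 's \<Rightarrow> 's \<Rightarrow> bool" where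
  "strict_of le x y \<longleftrightarrow> le x y \<and> \<not> le y x"

definition strong_strict_mono :: "'s set \<Rightarrow> ('a \<Rightarrow> 's \<Rightarrow> 's \<Rightarrow> bool) \<Rightarrow> ('s \<Rightarrow> 's \<Rightarrow> bool) \<Rightarrow> bool" where
  "strong_strict_mono S step le \<longleftrightarrow>
     (\<forall>a x y x'. x \<in> S \<longrightarrow> x' \<in> S \<longrightarrow> step a x y \<longrightarrow> le x x' \<longrightarrow>
        (\<exists>y'. step a x' y' \<and> le y y' \<and> (strict_of le x x' \<longrightarrow> strict_of le y y')))"

definition deterministic :: "'s set \<Rightarrow> ('a \<Rightarrow> 's \<Rightarrow> 's \<Rightarrow> bool) \<Rightarrow> bool" where
  "deterministic S step \<longleftrightarrow>
     (\<forall>a x y y'. x \<in> S \<longrightarrow> step a x y \<longrightarrow> step a x y' \<longrightarrow> y = y')"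

definition Post :: "('a \<Rightarrow> 'x \<Rightarrow> 'x \<Rightarrow> bool) \<Rightarrow> 'x set \<Rightarrow> 'a \<Rightarrow> 'x set" where
  "Post step D a = {y. \<exists>x\<in>D. step a x y}"

definition down :: "('x \<Rightarrow> 'x \<Rightarrow> bool) \<Rightarrow> 'x set \<Rightarrow> 'x set" where
  "down le D = {x. \<exists>y\<in>D. le x y}"

definition is_ideal :: "('x \<Rightarrow> 'x \<Rightarrow> bool) \<Rightarrow> 'x set \<Rightarrow> bool" where
  "is_ideal le I \<longleftrightarrow> I \<noteq> {} \<and> (\<forall>x\<in>I. \<forall>y. le y x \<longrightarrow> y \<in> I) \<and>
     (\<forall>x\<in>I. \<forall>y\<in>I. \<exists>z\<in>I. le x z \<and> le y z)"

definition Idl :: "('x \<Rightarrow> 'x \<Rightarrow> bool) \<Rightarrow> 'x set set" where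
  "Idl le = {I. is_ideal le I}"

definition Cstep :: "('a \<Rightarrow> 'x \<Rightarrow> 'x \<Rightarrow> bool) \<Rightarrow> ('x \<Rightarrow> 'x \<Rightarrow> bool) \<Rightarrow> 'a \<Rightarrow> 'x set \<Rightarrow> 'x set \<Rightarrow> bool" where
  "Cstep step le a I J \<longleftrightarrow> J \<in> Idl le \<and> J \<subseteq> down le (Post step I a) \<and>
     (\<forall>K\<in>Idl le. J \<subseteq> K \<longrightarrow> K \<subseteq> down le (Post step I a) \<longrightarrow> K = J)"

definition capp :: "('a \<Rightarrow> 'x \<Rightarrow> 'x \<Rightarrow> bool) \<Rightarrow> ('x \<Rightarrow> 'x \<Rightarrow> bool) \<Rightarrow> 'a list \<Rightarrow> 'x set \<Rightarrow> 'x set option" where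
  "capp step le w I = (if \<exists>J. gsteps (Cstep step le) w I J
      then Some (THE J. gsteps (Cstep step le) w I J) else None)"

definition cinf :: "('a \<Rightarrow> 'x \<Rightarrow> 'x \<Rightarrow> bool) \<Rightarrow> ('x \<Rightarrow> 'x \<Rightarrow> bool) \<Rightarrow> 'a list \<Rightarrow> 'x set \<Rightarrow> 'x set" where
  "cinf step le w I = (if \<exists>J. capp step le w I = Some J \<and> I \<subset> J
      then \<Union>{J. \<exists>k. capp step le (concat (replicate k w)) I = Some J}
      else I)"

fun Idl_level :: "('x \<Rightarrow> 'x \<Rightarrow> bool) \<Rightarrow> nat \<Rightarrow> 'x set set" where
  "Idl_level le 0 = Idl le"
| "Idl_level le (Suc n) = {\<Union>(range f) | f. (\<forall>i. f i \<in> Idl_level le n) \<and> (\<forall>i. f i \<subset> f (Suc i))}"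

definition very_wsts :: "('a \<Rightarrow> 'x \<Rightarrow> 'x \<Rightarrow> bool) \<Rightarrow> ('x \<Rightarrow> 'x \<Rightarrow> bool) \<Rightarrow> bool" where
  "very_wsts step le \<longleftrightarrow>
     wsts UNIV step le \<and> strong_mono UNIV step le \<and>
     wsts (Idl le) (Cstep step le) (\<subseteq>) \<and> deterministic (Idl le) (Cstep step le) \<and>
     strong_strict_mono (Idl le) (Cstep step le) (\<subseteq>) \<and>
     (\<exists>n. Idl_level le n = {})"

text \<open>Nodes are words (the arc labels from the root), N is the node set and L the final
  labelling (ideal, numaccel). km_init gives the label a node receives upon creation.\<close>
definition km_init :: "('a \<Rightarrow> 'x \<Rightarrow> 'x \<Rightarrow> bool) \<Rightarrow> ('x \<Rightarrow> 'x \<Rightarrow> bool) \<Rightarrow> 'x set \<Rightarrow>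
    ('a list \<Rightarrow> 'x set \<times> nat) \<Rightarrow> 'a list \<Rightarrow> 'x set \<times> nat" where
  "km_init step le I0 L c = (if c = [] then (I0, 0)
     else (the (capp step le [last c] (fst (L (butlast c)))), snd (L (butlast c))))"

definition km_marked_leaf :: "('a \<Rightarrow> 'x \<Rightarrow> 'x \<Rightarrow> bool) \<Rightarrow> ('x \<Rightarrow> 'x \<Rightarrow> bool) \<Rightarrow> 'x set \<Rightarrow>
    ('a list \<Rightarrow> 'x set \<times> nat) \<Rightarrow> 'a list \<Rightarrow> bool" where
  "km_marked_leaf step le I0 L c \<longleftrightarrow>
     (\<exists>c'. strict_prefix c' c \<and> fst (L c') = fst (km_init step le I0 L c))"

definition km_accel_cand :: "('a \<Rightarrow> 'x \<Rightarrow> 'x \<Rightarrow> bool) \<Rightarrow> ('x \<Rightarrow> 'x \<Rightarrow> bool) \<Rightarrow> 'x set \<Rightarrow>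
    ('a list \<Rightarrow> 'x set \<times> nat) \<Rightarrow> 'a list \<Rightarrow> 'a list \<Rightarrow> bool" where
  "km_accel_cand step le I0 L c c' \<longleftrightarrow> strict_prefix c' c \<and>
     fst (L c') \<subset> fst (km_init step le I0 L c) \<and> snd (L c') = snd (km_init step le I0 L c)"

text \<open>(N, L) is a tree returnable by the Ideal Karp-Miller algorithm on input (S, I0)
  (for some resolution of the nondeterministic choice of the ancestor c').\<close>
definition km_tree :: "('a \<Rightarrow> 'x \<Rightarrow> 'x \<Rightarrow> bool) \<Rightarrow> ('x \<Rightarrow> 'x \<Rightarrow> bool) \<Rightarrow> 'x set \<Rightarrow>
    'a list set \<Rightarrow> ('a list \<Rightarrow> 'x set \<times> nat) \<Rightarrow> bool" where
  "km_tree step le I0 N L \<longleftrightarrow>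
     finite N \<and> [] \<in> N \<and>
     (\<forall>c a. c @ [a] \<in> N \<longrightarrow> c \<in> N) \<and>
     (\<forall>c\<in>N. \<forall>a. c @ [a] \<in> N \<longleftrightarrow>
        \<not> km_marked_leaf step le I0 L c \<and> capp step le [a] (fst (L c)) \<noteq> None) \<and>
     (\<forall>c\<in>N.
        if km_marked_leaf step le I0 L c then L c = km_init step le I0 L c
        else if (\<exists>c'. km_accel_cand step le I0 L c c') then
          (\<exists>c'. km_accel_cand step le I0 L c c' \<and>
             L c = (cinf step le (drop (length c') c) (fst (km_init step le I0 L c)),
                    snd (km_init step le I0 L c) + 1))
        else L c = km_init step le I0 L c)"

definition km_leaf :: "'a list set \<Rightarrow> 'a list \<Rightarrow> bool" where
  "km_leaf N c \<longleftrightarrow> c \<in> N \<and> (\<forall>a. c @ [a] \<notin> N)"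

definition stut_edge :: "'a list set \<Rightarrow> ('a list \<Rightarrow> 'x set \<times> nat) \<Rightarrow> 'a list \<Rightarrow> 'a list \<Rightarrow> bool" where
  "stut_edge N L c d \<longleftrightarrow> c \<in> N \<and> d \<in> N \<and>
     ((\<exists>a. d = c @ [a]) \<or> (km_leaf N c \<and> prefix d c \<and> fst (L d) = fst (L c)))"

end

theory Submission
  imports Defs
begin

text \<open>Ideals of level \<open>n + 1\<close> are unions of strictly increasing sequences of level-\<open>n\<close> ideals.
  A completion step preserves the level of an ideal: by determinism it is \<open>\<down>Post(I, a)\<close>, which
  commutes with such unions, and strong-strict monotonicity keeps the image sequence strictly
  increasing. An acceleration \<open>w\<^sup>\<infinity>(I)\<close> with \<open>I \<subset> w(I)\<close> is the union of the strictly increasing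
  sequence \<open>w\<^sup>k(I)\<close> and so raises the level by one. Hence going down a branch of the Karp-Miller
  tree, the level of the ideal grows by at least the number of accelerations performed. If a
  node \<open>d\<close> below \<open>c\<close> carried the ideal of \<open>c\<close> with \<open>k > 0\<close> more accelerations, that ideal would lie
  in level \<open>n + k\<close> whenever it lies in level \<open>n\<close>, so in every level, which is impossible as there
  are finitely many levels. This is (1); (2) follows since arcs never decrease \<open>numaccel\<close> and
  \<open>\<epsilon>\<close>-transitions join nodes of one branch carrying the same ideal.\<close>

section \<open>Ideals\<close>

lemma in_IdlI:
  assumes "K \<noteq> {}" and "\<And>x y. x \<in> K \<Longrightarrow> le y x \<Longrightarrow> y \<in> K"
    and "\<And>x y. x \<in> K \<Longrightarrow> y \<in> K \<Longrightarrow> \<exists>z\<in>K. le x z \<and> le y z"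
  shows "K \<in> Idl le"
  using assms unfolding Idl_def is_ideal_def by blast

lemma Idl_nonempty: "K \<in> Idl le \<Longrightarrow> K \<noteq> {}"
  unfolding Idl_def is_ideal_def by blast

lemma Idl_downward_closed: "K \<in> Idl le \<Longrightarrow> x \<in> K \<Longrightarrow> le y x \<Longrightarrow> y \<in> K"
  unfolding Idl_def is_ideal_def by blast

lemma Idl_directed: "K \<in> Idl le \<Longrightarrow> x \<in> K \<Longrightarrow> y \<in> K \<Longrightarrow> \<exists>z\<in>K. le x z \<and> le y z"
  unfolding Idl_def is_ideal_def by blast

lemma Union_chain_in_Idl:
  assumes "subset.chain (Idl le) C" and "C \<noteq> {}"
  shows "\<Union>C \<in> Idl le"
proof (rule in_IdlI)
  have C: "C \<subseteq> Idl le" and total: "\<And>X Y. X \<in> C \<Longrightarrow> Y \<in> C \<Longrightarrow> X \<subseteq> Y \<or> Y \<subseteq> X"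
    using assms(1) unfolding subset.chain_def by auto
  show "\<Union>C \<noteq> {}"
    using assms(2) C Idl_nonempty[of _ le] by blast
  show "y \<in> \<Union>C" if "x \<in> \<Union>C" "le y x" for x y
    using that C Idl_downward_closed[of _ le] by blast
  show "\<exists>z\<in>\<Union>C. le x z \<and> le y z" if xy: "x \<in> \<Union>C" "y \<in> \<Union>C" for x y
  proof -
    obtain X Y where "x \<in> X" "X \<in> C" "y \<in> Y" "Y \<in> C"
      using xy by blast
    then have "x \<in> X \<union> Y" "y \<in> X \<union> Y" "X \<union> Y \<in> C"
      using total[of X Y] by (auto simp: sup.absorb1 sup.absorb2)
    then show ?thesis
      using Idl_directed[of "X \<union> Y" le] C by blast
  qed
qed

lemma Union_mono_seq_in_Idl:
  fixes f :: "nat \<Rightarrow> 'x set"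
  assumes "\<And>i. f i \<in> Idl le" and "mono f"
  shows "\<Union>(range f) \<in> Idl le"
proof (rule Union_chain_in_Idl)
  have "f i \<subseteq> f j \<or> f j \<subseteq> f i" for i j
    using nat_le_linear[of i j] monoD[OF assms(2), of i j] monoD[OF assms(2), of j i] by blast
  then show "subset.chain (Idl le) (range f)"
    using assms(1) unfolding subset.chain_def by auto
qed simp

context
  fixes le :: "'x \<Rightarrow> 'x \<Rightarrow> bool"
  assumes qo: "qo_on_rel UNIV le"
begin

lemma down_singleton_in_Idl: "down le {y} \<in> Idl le"
  using qo unfolding qo_on_rel_def down_def Idl_def is_ideal_def by blast

lemma maximal_ideal_exists:
  assumes "y \<in> D" and "\<And>x z. x \<in> D \<Longrightarrow> le z x \<Longrightarrow> z \<in> D"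
  shows "\<exists>M\<in>Idl le. y \<in> M \<and> M \<subseteq> D \<and> (\<forall>K\<in>Idl le. M \<subseteq> K \<longrightarrow> K \<subseteq> D \<longrightarrow> K = M)"
proof -
  define A where "A = {K \<in> Idl le. y \<in> K \<and> K \<subseteq> D}"
  have "down le {y} \<in> A"
    using down_singleton_in_Idl qo assms unfolding A_def qo_on_rel_def down_def by auto
  moreover have "\<Union>C \<in> A" if "C \<noteq> {}" "subset.chain A C" for C
  proof -
    have CA: "C \<subseteq> A"
      using that(2) unfolding subset.chain_def by blast
    then have "subset.chain (Idl le) C"
      using that(2) unfolding A_def subset.chain_def by blast
    then have "\<Union>C \<in> Idl le"
      using Union_chain_in_Idl that(1) by blast
    moreover have "y \<in> \<Union>C" "\<Union>C \<subseteq> D"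
      using CA that(1) unfolding A_def by auto
    ultimately show ?thesis
      unfolding A_def by blast
  qed
  ultimately obtain M where M: "M \<in> Idl le" "y \<in> M" "M \<subseteq> D" and max: "\<forall>K\<in>A. M \<subseteq> K \<longrightarrow> K = M"
    using subset_Zorn_nonempty[of A] unfolding A_def by blast
  show ?thesis
  proof (rule bexI[OF _ M(1)], intro conjI ballI impI)
    show "y \<in> M" "M \<subseteq> D"
      by (fact M)+
    show "K = M" if "K \<in> Idl le" "M \<subseteq> K" "K \<subseteq> D" for K
      using max that M(2) unfolding A_def by blast
  qed
qed

lemma Cstep_exists:
  assumes "y \<in> down le (Post step I a)"
  shows "\<exists>J. Cstep step le a I J \<and> y \<in> J"
proof -
  have "z \<in> down le (Post step I a)" if "x \<in> down le (Post step I a)" "le z x" for x z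
    using that qo unfolding down_def qo_on_rel_def by blast
  then show ?thesis
    using maximal_ideal_exists[OF assms] unfolding Cstep_def by blast
qed

end

section \<open>The completion\<close>

lemma gsteps_append:
  "gsteps step (u @ v) x y \<longleftrightarrow> (\<exists>z. gsteps step u x z \<and> gsteps step v z y)"
  by (induction u arbitrary: x) auto

lemma Cstep_in_Idl: "Cstep step le a I J \<Longrightarrow> J \<in> Idl le"
  unfolding Cstep_def by blast

lemma down_Post_mono: "I \<subseteq> I' \<Longrightarrow> down le (Post step I a) \<subseteq> down le (Post step I' a)"
  unfolding down_def Post_def by blast

lemma down_Post_UN: "down le (Post step (\<Union>i. f i) a) = (\<Union>i. down le (Post step (f i) a))"
  unfolding down_def Post_def by blast

section \<open>Levels of ideals\<close>

lemma Idl_level_Suc_subset: "Idl_level le (Suc n) \<subseteq> Idl_level le n"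
proof (induction n)
  case 0
  have "\<Union>(range f) \<in> Idl le" if "\<forall>i. f i \<in> Idl le" "\<forall>i. f i \<subset> f (Suc i)" for f :: "nat \<Rightarrow> _"
  proof (rule Union_mono_seq_in_Idl)
    show "mono f"
      unfolding mono_iff_le_Suc using that(2) by blast
  qed (use that in blast)
  then show ?case by auto
next
  case (Suc n)
  show ?case
  proof
    fix X assume "X \<in> Idl_level le (Suc (Suc n))"
    then obtain f where f: "X = \<Union>(range f)" "\<forall>i. f i \<in> Idl_level le (Suc n)" "\<forall>i. f i \<subset> f (Suc i)"
      by auto
    then have "\<forall>i. f i \<in> Idl_level le n"
      using Suc.IH by blast
    with f show "X \<in> Idl_level le (Suc n)"
      unfolding Idl_level.simps(2) by blast
  qed
qed

lemma Idl_level_antimono: "n \<le> m \<Longrightarrow> Idl_level le m \<subseteq> Idl_level le n"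
  by (induction m rule: dec_induct) (use Idl_level_Suc_subset in blast)+

lemma Idl_level_subset_Idl: "Idl_level le n \<subseteq> Idl le"
  using Idl_level_antimono[of 0 n] by simp

locale very_wsts_system =
  fixes step :: "'a \<Rightarrow> 'x \<Rightarrow> 'x \<Rightarrow> bool" and le :: "'x \<Rightarrow> 'x \<Rightarrow> bool"
  assumes very_wsts: "very_wsts step le"
begin

lemma qo_le: "qo_on_rel UNIV le"
  using very_wsts unfolding very_wsts_def wsts_def wqo_on_rel_def by blast

lemma Cstep_deterministic:
  "I \<in> Idl le \<Longrightarrow> Cstep step le a I J \<Longrightarrow> Cstep step le a I J' \<Longrightarrow> J = J'"
  using very_wsts unfolding very_wsts_def deterministic_def by blast

lemma Cstep_strict_mono:
  assumes "I \<in> Idl le" "I' \<in> Idl le" "Cstep step le a I J" "I \<subseteq> I'"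
  shows "\<exists>J'. Cstep step le a I' J' \<and> J \<subseteq> J' \<and> (I \<subset> I' \<longrightarrow> J \<subset> J')"
proof -
  have "strong_strict_mono (Idl le) (Cstep step le) (\<subseteq>)"
    using very_wsts unfolding very_wsts_def by blast
  then obtain J' where "Cstep step le a I' J'" "J \<subseteq> J'" "strict_of (\<subseteq>) I I' \<longrightarrow> strict_of (\<subseteq>) J J'"
    using assms unfolding strong_strict_mono_def by blast
  then show ?thesis
    unfolding strict_of_def by blast
qed

text \<open>Each element of \<open>\<down>Post(I, a)\<close> lies in a maximal ideal below it, which by determinism is \<open>J\<close>.\<close>
lemma Cstep_eq_down_Post:
  assumes "I \<in> Idl le" and "Cstep step le a I J"
  shows "J = down le (Post step I a)"
proof
  show "J \<subseteq> down le (Post step I a)"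
    using assms(2) unfolding Cstep_def by blast
  show "down le (Post step I a) \<subseteq> J"
  proof
    fix y assume "y \<in> down le (Post step I a)"
    from Cstep_exists[OF qo_le this] obtain J' where "Cstep step le a I J'" "y \<in> J'"
      by blast
    then show "y \<in> J"
      using Cstep_deterministic[OF assms] by blast
  qed
qed

lemma gsteps_Cstep_deterministic:
  "gsteps (Cstep step le) w I J \<Longrightarrow> gsteps (Cstep step le) w I J' \<Longrightarrow> I \<in> Idl le \<Longrightarrow> J = J'"
proof (induction w arbitrary: I)
  case (Cons a w)
  then obtain K K' where "Cstep step le a I K" "gsteps (Cstep step le) w K J"
    and "Cstep step le a I K'" "gsteps (Cstep step le) w K' J'"
    by auto
  with Cons.IH Cons.prems(3) show ?case
    using Cstep_deterministic Cstep_in_Idl by metis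
qed simp

lemma The_gsteps_Cstep:
  assumes "gsteps (Cstep step le) w I J" and "I \<in> Idl le"
  shows "(THE J. gsteps (Cstep step le) w I J) = J"
proof (rule the_equality)
  show "J' = J" if "gsteps (Cstep step le) w I J'" for J'
    using gsteps_Cstep_deterministic[OF that assms] .
qed (fact assms(1))

lemma capp_eq_Some_iff:
  assumes "I \<in> Idl le"
  shows "capp step le w I = Some J \<longleftrightarrow> gsteps (Cstep step le) w I J"
proof
  assume "capp step le w I = Some J"
  then obtain J' where "gsteps (Cstep step le) w I J'" "J = (THE J. gsteps (Cstep step le) w I J)"
    unfolding capp_def by (auto split: if_splits)
  then show "gsteps (Cstep step le) w I J"
    using The_gsteps_Cstep assms by simp
qed (use The_gsteps_Cstep assms in \<open>auto simp: capp_def\<close>)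

lemma gsteps_Cstep_strict_mono:
  assumes "gsteps (Cstep step le) w I J" "I \<in> Idl le" "I' \<in> Idl le" "I \<subseteq> I'"
  shows "\<exists>J'. gsteps (Cstep step le) w I' J' \<and> J \<subseteq> J' \<and> (I \<subset> I' \<longrightarrow> J \<subset> J')"
  using assms
proof (induction w arbitrary: I I')
  case (Cons a w)
  then obtain K where K: "Cstep step le a I K" "gsteps (Cstep step le) w K J"
    by auto
  then obtain K' where K': "Cstep step le a I' K'" "K \<subseteq> K'" "I \<subset> I' \<longrightarrow> K \<subset> K'"
    using Cstep_strict_mono[OF Cons.prems(2,3) K(1) Cons.prems(4)] by blast
  then obtain J' where "gsteps (Cstep step le) w K' J'" "J \<subseteq> J'" "K \<subset> K' \<longrightarrow> J \<subset> J'"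
    using Cons.IH[OF K(2) Cstep_in_Idl[OF K(1)] Cstep_in_Idl[OF K'(1)]] by blast
  with K' show ?case
    by auto
qed simp

lemma Cstep_preserves_Idl_level:
  assumes "I \<in> Idl_level le n" and "Cstep step le a I J"
  shows "J \<in> Idl_level le n"
  using assms
proof (induction n arbitrary: I J)
  case 0
  then show ?case
    using Cstep_in_Idl by simp
next
  case (Suc n)
  obtain f where I: "I = (\<Union>i. f i)" and f_level: "\<And>i. f i \<in> Idl_level le n"
    and f_strict: "\<And>i. f i \<subset> f (Suc i)"
    using Suc.prems(1) by auto
  have f_Idl: "f i \<in> Idl le" for i
    using f_level Idl_level_subset_Idl by blast
  have f_mono: "mono f"
    unfolding mono_iff_le_Suc using f_strict by (simp add: less_imp_le)
  have "I \<in> Idl le"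
    using Suc.prems(1) Idl_level_subset_Idl by blast
  then have J: "J = (\<Union>i. down le (Post step (f i) a))"
    using Cstep_eq_down_Post[OF _ Suc.prems(2)] down_Post_UN I by simp
  then obtain k y where y: "y \<in> down le (Post step (f k) a)"
    using Idl_nonempty[OF Cstep_in_Idl[OF Suc.prems(2)]] by auto
  define g where "g i = down le (Post step (f (k + i)) a)" for i
  have g_step: "Cstep step le a (f (k + i)) (g i)" for i
  proof -
    have "y \<in> down le (Post step (f (k + i)) a)"
      using y monoD[OF f_mono, of k "k + i"] down_Post_mono[of "f k" "f (k + i)" le step a] by auto
    from Cstep_exists[OF qo_le this] obtain K where "Cstep step le a (f (k + i)) K"
      by blast
    then show ?thesis
      unfolding g_def using Cstep_eq_down_Post[OF f_Idl] by metis
  qed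
  have g_strict: "g i \<subset> g (Suc i)" for i
  proof -
    obtain K where "Cstep step le a (f (k + Suc i)) K" "g i \<subset> K"
      using Cstep_strict_mono[OF f_Idl f_Idl[of "k + Suc i"] g_step[of i]] f_strict[of "k + i"] by auto
    then show ?thesis
      using Cstep_deterministic[OF f_Idl _ g_step[of "Suc i"]] by blast
  qed
  have "J = (\<Union>i. g i)"
  proof
    show "J \<subseteq> (\<Union>i. g i)"
    proof
      fix z assume "z \<in> J"
      then obtain i where "z \<in> down le (Post step (f i) a)"
        using J by blast
      then have "z \<in> g i"
        unfolding g_def using monoD[OF f_mono, of i "k + i"] down_Post_mono[of "f i" "f (k + i)" le step a]
        by auto
      then show "z \<in> (\<Union>i. g i)"
        by blast
    qed
    show "(\<Union>i. g i) \<subseteq> J"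
      unfolding J g_def by blast
  qed
  moreover have "g i \<in> Idl_level le n" for i
    using Suc.IH[OF f_level g_step] .
  ultimately show ?case
    using g_strict unfolding Idl_level.simps(2) by blast
qed

lemma gsteps_Cstep_preserves_Idl_level:
  "gsteps (Cstep step le) w I J \<Longrightarrow> I \<in> Idl_level le n \<Longrightarrow> J \<in> Idl_level le n"
proof (induction w arbitrary: I)
  case (Cons a w)
  then obtain K where "Cstep step le a I K" "gsteps (Cstep step le) w K J"
    by auto
  with Cons.IH Cons.prems(2) show ?case
    using Cstep_preserves_Idl_level by blast
qed simp

lemma cinf_in_Idl_level_Suc:
  assumes I: "I \<in> Idl_level le n" and IJ: "gsteps (Cstep step le) w I J" and "I \<subset> J"
  shows "cinf step le w I \<in> Idl_level le (Suc n)"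
proof -
  have I_Idl: "I \<in> Idl le"
    using I Idl_level_subset_Idl by blast
  define it where "it k = ((\<lambda>X. the (capp step le w X)) ^^ k) I" for k
  have it_Suc: "it (Suc k) = the (capp step le w (it k))" for k
    unfolding it_def by simp
  have it_chain: "it k \<in> Idl_level le n \<and> gsteps (Cstep step le) w (it k) (it (Suc k)) \<and> it k \<subset> it (Suc k)"
    for k
  proof (induction k)
    case 0
    have "it (Suc 0) = J"
      unfolding it_Suc using IJ capp_eq_Some_iff[OF I_Idl, of w J] by (simp add: it_def)
    then show ?case
      using I IJ \<open>I \<subset> J\<close> by (simp add: it_def)
  next
    case (Suc k)
    then have level: "it (Suc k) \<in> Idl_level le n"
      using gsteps_Cstep_preserves_Idl_level by blast
    then have "it (Suc k) \<in> Idl le" "it k \<in> Idl le"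
      using Suc Idl_level_subset_Idl by blast+
    then obtain K where K: "gsteps (Cstep step le) w (it (Suc k)) K" "it (Suc k) \<subset> K"
      using gsteps_Cstep_strict_mono[of w "it k" "it (Suc k)" "it (Suc k)"] Suc by blast
    moreover have "it (Suc (Suc k)) = K"
      unfolding it_Suc[of "Suc k"] using K(1) capp_eq_Some_iff[OF \<open>it (Suc k) \<in> Idl le\<close>, of w K]
      by simp
    ultimately show ?case
      using level by simp
  qed
  have "gsteps (Cstep step le) (concat (replicate k w)) I (it k)" for k
  proof (induction k)
    case (Suc k)
    have "concat (replicate (Suc k) w) = concat (replicate k w) @ w"
      by (simp flip: replicate_append_same)
    then show ?case
      using Suc it_chain[of k] gsteps_append by metis
  qed (simp add: it_def)
  then have "capp step le (concat (replicate k w)) I = Some (it k)" for k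
    by (simp add: capp_eq_Some_iff[OF I_Idl])
  then have "{K. \<exists>k. capp step le (concat (replicate k w)) I = Some K} = range it"
    by auto
  moreover have "cinf step le w I = \<Union>{K. \<exists>k. capp step le (concat (replicate k w)) I = Some K}"
    unfolding cinf_def using capp_eq_Some_iff[OF I_Idl] IJ \<open>I \<subset> J\<close> by auto
  ultimately have "cinf step le w I = (\<Union>k. it k)"
    by simp
  with it_chain show ?thesis
    unfolding Idl_level.simps(2) by (intro CollectI exI[of _ it]) simp
qed

lemma cinf_in_Idl:
  assumes "I \<in> Idl le"
  shows "cinf step le w I \<in> Idl le"
proof (cases "\<exists>J. capp step le w I = Some J \<and> I \<subset> J")
  case True
  then obtain J where "gsteps (Cstep step le) w I J" "I \<subset> J"
    using capp_eq_Some_iff[OF assms] by blast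
  moreover have "I \<in> Idl_level le 0"
    using assms by simp
  ultimately have "cinf step le w I \<in> Idl_level le (Suc 0)"
    using cinf_in_Idl_level_Suc by blast
  then show ?thesis
    using Idl_level_subset_Idl by blast
next
  case False
  then have "cinf step le w I = I"
    unfolding cinf_def by (rule if_not_P)
  then show ?thesis
    using assms by simp
qed

end

section \<open>The ideal Karp-Miller tree\<close>

locale km_tree_system = very_wsts_system step le
  for step :: "'a \<Rightarrow> 'x \<Rightarrow> 'x \<Rightarrow> bool" and le :: "'x \<Rightarrow> 'x \<Rightarrow> bool" +
  fixes I0 :: "'x set" and N :: "'a list set" and L :: "'a list \<Rightarrow> 'x set \<times> nat"
  assumes I0_in_Idl: "I0 \<in> Idl le"
    and km_tree: "km_tree step le I0 N L"
begin

lemma parent_in_tree: "c @ [a] \<in> N \<Longrightarrow> c \<in> N"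
  using km_tree unfolding km_tree_def by blast

lemma prefix_in_tree: "prefix c d \<Longrightarrow> d \<in> N \<Longrightarrow> c \<in> N"
proof (induction d rule: rev_induct)
  case (snoc a d)
  then show ?case
    using parent_in_tree by (cases "c = d @ [a]") auto
qed simp

lemma label_root: "L [] = (I0, 0)"
proof -
  have "[] \<in> N"
    using km_tree unfolding km_tree_def by blast
  moreover have "\<not> km_marked_leaf step le I0 L []" "\<not> km_accel_cand step le I0 L [] c'" for c'
    unfolding km_marked_leaf_def km_accel_cand_def by simp_all
  ultimately show ?thesis
    using km_tree unfolding km_tree_def km_init_def by auto
qed

definition child_label_from :: "'a list \<Rightarrow> 'a \<Rightarrow> 'x set \<Rightarrow> bool" where
  "child_label_from c a I \<longleftrightarrow> L (c @ [a]) = (I, snd (L c)) \<or>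
     (\<exists>c'. strict_prefix c' (c @ [a]) \<and> fst (L c') \<subset> I \<and> snd (L c') = snd (L c) \<and>
        L (c @ [a]) = (cinf step le (drop (length c') (c @ [a])) I, snd (L c) + 1))"

lemma label_child_capp:
  assumes "c @ [a] \<in> N"
  obtains I where "capp step le [a] (fst (L c)) = Some I"
    and "child_label_from c a I"
proof -
  have "c \<in> N"
    using assms parent_in_tree by blast
  then obtain I where I: "capp step le [a] (fst (L c)) = Some I"
    using assms km_tree unfolding km_tree_def by blast
  then have init: "km_init step le I0 L (c @ [a]) = (I, snd (L c))"
    unfolding km_init_def by simp
  have "if km_marked_leaf step le I0 L (c @ [a]) then L (c @ [a]) = km_init step le I0 L (c @ [a])
    else if \<exists>c'. km_accel_cand step le I0 L (c @ [a]) c' then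
      \<exists>c'. km_accel_cand step le I0 L (c @ [a]) c' \<and>
        L (c @ [a]) = (cinf step le (drop (length c') (c @ [a])) (fst (km_init step le I0 L (c @ [a]))),
                       snd (km_init step le I0 L (c @ [a])) + 1)
    else L (c @ [a]) = km_init step le I0 L (c @ [a])"
    using assms km_tree unfolding km_tree_def by blast
  then have "child_label_from c a I"
    unfolding child_label_from_def init km_accel_cand_def by (auto split: if_splits)
  with I show ?thesis
    using that by blast
qed

lemma label_in_Idl: "d \<in> N \<Longrightarrow> fst (L d) \<in> Idl le"
proof (induction d rule: rev_induct)
  case Nil
  then show ?case
    using label_root I0_in_Idl by simp
next
  case (snoc a d)
  then have d_Idl: "fst (L d) \<in> Idl le"
    using parent_in_tree by blast
  obtain I where "capp step le [a] (fst (L d)) = Some I"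
    and L_da: "child_label_from d a I"
    by (rule label_child_capp[OF snoc.prems])
  then have "I \<in> Idl le"
    using capp_eq_Some_iff[OF d_Idl] Cstep_in_Idl by simp
  with L_da show ?case
    using cinf_in_Idl unfolding child_label_from_def by auto
qed

lemma label_child:
  assumes "c @ [a] \<in> N"
  obtains I where "Cstep step le a (fst (L c)) I"
    and "child_label_from c a I"
proof -
  obtain I where capp: "capp step le [a] (fst (L c)) = Some I"
    and "child_label_from c a I"
    by (rule label_child_capp[OF assms])
  moreover have "fst (L c) \<in> Idl le"
    using assms parent_in_tree label_in_Idl by blast
  ultimately show ?thesis
    using that capp_eq_Some_iff[of "fst (L c)" "[a]" I] by simp
qed

lemma numaccel_child: "c @ [a] \<in> N \<Longrightarrow> snd (L c) \<le> snd (L (c @ [a]))"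
  by (rule label_child) (auto simp: child_label_from_def)

lemma numaccel_mono: "prefix c d \<Longrightarrow> d \<in> N \<Longrightarrow> snd (L c) \<le> snd (L d)"
proof (induction d rule: rev_induct)
  case (snoc a d)
  show ?case
  proof (cases "c = d @ [a]")
    case False
    then have "snd (L c) \<le> snd (L d)"
      using snoc parent_in_tree by simp
    then show ?thesis
      using numaccel_child[OF snoc.prems(2)] by simp
  qed simp
qed simp

lemma gsteps_Cstep_along_unaccelerated_path:
  "prefix c d \<Longrightarrow> d \<in> N \<Longrightarrow> snd (L c) = snd (L d) \<Longrightarrow>
   gsteps (Cstep step le) (drop (length c) d) (fst (L c)) (fst (L d))"
proof (induction d rule: rev_induct)
  case (snoc a d)
  show ?case
  proof (cases "c = d @ [a]")
    case False
    then have "prefix c d" and d_in: "d \<in> N"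
      using snoc.prems(1,2) parent_in_tree by auto
    then have same: "snd (L c) = snd (L d)" "snd (L d) = snd (L (d @ [a]))"
      using numaccel_mono numaccel_child[OF snoc.prems(2)] snoc.prems(3) by (metis le_antisym)+
    obtain I where "Cstep step le a (fst (L d)) I"
      and "child_label_from d a I"
      by (rule label_child[OF snoc.prems(2)])
    moreover have "snd (L (d @ [a])) \<noteq> snd (L d) + 1"
      using same(2) by simp
    ultimately have "Cstep step le a (fst (L d)) (fst (L (d @ [a])))"
      unfolding child_label_from_def by auto
    moreover have "drop (length c) (d @ [a]) = drop (length c) d @ [a]"
      using prefix_length_le[OF \<open>prefix c d\<close>] by simp
    ultimately show ?thesis
      using snoc.IH[OF \<open>prefix c d\<close> d_in same(1)] gsteps_append by fastforce
  qed simp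
qed simp

text \<open>An accelerated node lies one level higher than its unaccelerated label: its ancestor \<open>c'\<close>
  reaches, with the same number of accelerations, a strictly larger ideal, so by strong-strict
  monotonicity the word from \<open>c'\<close> strictly increases that ideal again.\<close>
lemma child_Idl_level:
  assumes "c @ [a] \<in> N" and "fst (L c) \<in> Idl_level le m"
  shows "fst (L (c @ [a])) \<in> Idl_level le (m + (snd (L (c @ [a])) - snd (L c)))"
proof -
  obtain I where step_I: "Cstep step le a (fst (L c)) I"
    and label: "child_label_from c a I"
    by (rule label_child[OF assms(1)])
  have I_level: "I \<in> Idl_level le m"
    using Cstep_preserves_Idl_level[OF assms(2) step_I] .
  from label[unfolded child_label_from_def] show ?thesis
  proof (elim disjE exE conjE)
    assume "L (c @ [a]) = (I, snd (L c))"
    with I_level show ?thesis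
      by simp
  next
    fix c' assume "strict_prefix c' (c @ [a])" "fst (L c') \<subset> I" "snd (L c') = snd (L c)"
      and accel: "L (c @ [a]) = (cinf step le (drop (length c') (c @ [a])) I, snd (L c) + 1)"
    let ?w = "drop (length c') (c @ [a])"
    have "prefix c' c"
      using \<open>strict_prefix c' (c @ [a])\<close> unfolding strict_prefix_def prefix_snoc by blast
    then have "gsteps (Cstep step le) (drop (length c') c) (fst (L c')) (fst (L c))"
      using gsteps_Cstep_along_unaccelerated_path assms(1) parent_in_tree \<open>snd (L c') = snd (L c)\<close>
      by blast
    moreover have "?w = drop (length c') c @ [a]"
      using prefix_length_le[OF \<open>prefix c' c\<close>] by simp
    ultimately have "gsteps (Cstep step le) ?w (fst (L c')) I"
      using step_I gsteps_append by fastforce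
    moreover have "fst (L c') \<in> Idl le"
      using label_in_Idl prefix_in_tree[OF \<open>prefix c' c\<close> parent_in_tree[OF assms(1)]] .
    moreover have "I \<in> Idl le"
      using Cstep_in_Idl[OF step_I] .
    ultimately obtain J where "gsteps (Cstep step le) ?w I J" "I \<subset> J"
      using gsteps_Cstep_strict_mono \<open>fst (L c') \<subset> I\<close> by blast
    then have "cinf step le ?w I \<in> Idl_level le (Suc m)"
      using cinf_in_Idl_level_Suc[OF I_level] by blast
    with accel show ?thesis
      by simp
  qed
qed

lemma descendant_Idl_level:
  "prefix c d \<Longrightarrow> d \<in> N \<Longrightarrow> fst (L c) \<in> Idl_level le n \<Longrightarrow>
   fst (L d) \<in> Idl_level le (n + (snd (L d) - snd (L c)))"
proof (induction d rule: rev_induct)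
  case (snoc a d)
  show ?case
  proof (cases "c = d @ [a]")
    case False
    then have "prefix c d" and "d \<in> N"
      using snoc.prems(1,2) parent_in_tree by auto
    then have "fst (L d) \<in> Idl_level le (n + (snd (L d) - snd (L c)))"
      using snoc.IH snoc.prems(3) by blast
    then have "fst (L (d @ [a])) \<in>
        Idl_level le (n + (snd (L d) - snd (L c)) + (snd (L (d @ [a])) - snd (L d)))"
      using child_Idl_level[OF snoc.prems(2)] by blast
    moreover have "snd (L c) \<le> snd (L d)" "snd (L d) \<le> snd (L (d @ [a]))"
      using numaccel_mono[OF \<open>prefix c d\<close> \<open>d \<in> N\<close>] numaccel_child[OF snoc.prems(2)] .
    ultimately show ?thesis
      by (simp add: add.assoc)
  qed (use snoc.prems(3) in simp)
qed simp

text \<open>Along a path from \<open>c\<close> back to the same ideal, every extra acceleration would raise the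
  level of that ideal by one; iterating the path climbs past the finitely many levels.\<close>
lemma numaccel_eq_if_same_ideal:
  assumes "prefix c d" "d \<in> N" "fst (L c) = fst (L d)"
  shows "snd (L c) = snd (L d)"
proof (rule ccontr)
  assume "snd (L c) \<noteq> snd (L d)"
  define k where "k = snd (L d) - snd (L c)"
  have "k \<ge> 1"
    using numaccel_mono[OF assms(1,2)] \<open>snd (L c) \<noteq> snd (L d)\<close> unfolding k_def by linarith
  have climb: "fst (L c) \<in> Idl_level le (n + k)" if "fst (L c) \<in> Idl_level le n" for n
    using descendant_Idl_level[OF assms(1,2) that] assms(3) unfolding k_def by simp
  have all_levels: "fst (L c) \<in> Idl_level le (j * k)" for j
  proof (induction j)
    case 0
    then show ?case
      using label_in_Idl prefix_in_tree[OF assms(1,2)] by simp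
  next
    case (Suc j)
    then show ?case
      using climb[of "j * k"] by (simp add: add.commute)
  qed
  obtain n where "Idl_level le n = {}"
    using very_wsts unfolding very_wsts_def by blast
  moreover have "fst (L c) \<in> Idl_level le n"
    using all_levels[of n] Idl_level_antimono[of n "n * k"] \<open>k \<ge> 1\<close> by auto
  ultimately show False
    by simp
qed

lemma numaccel_mono_stut_edge: "(stut_edge N L)\<^sup>*\<^sup>* c d \<Longrightarrow> snd (L c) \<le> snd (L d)"
proof (induction rule: rtranclp_induct)
  case (step y z)
  then have "y \<in> N" "z \<in> N" "(\<exists>a. z = y @ [a]) \<or> prefix z y \<and> fst (L z) = fst (L y)"
    unfolding stut_edge_def by auto
  then have "snd (L y) \<le> snd (L z)"
    using numaccel_child numaccel_eq_if_same_ideal by fastforce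
  with step.IH show ?case
    by simp
qed simp

end

theorem proposition25:
  fixes step :: "'a::finite \<Rightarrow> 'x \<Rightarrow> 'x \<Rightarrow> bool"
    and le :: "'x \<Rightarrow> 'x \<Rightarrow> bool"
    and I0 :: "'x set"
    and N :: "'a list set"
    and L :: "'a list \<Rightarrow> 'x set \<times> nat"
  assumes "very_wsts step le"
    and "I0 \<in> Idl le"
    and "km_tree step le I0 N L"
    and "c \<in> N" and "d \<in> N"
  shows "(prefix c d \<and> fst (L c) = fst (L d) \<longrightarrow> snd (L c) = snd (L d))
     \<and> ((stut_edge N L)\<^sup>*\<^sup>* c d \<longrightarrow> snd (L c) \<le> snd (L d))"
proof -
  interpret km_tree_system step le I0 N L
    using assms(1-3) by unfold_locales
  show ?thesis
    using numaccel_eq_if_same_ideal assms(5) numaccel_mono_stut_edge by blast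
qed

end
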